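(* In the binary setting below, the mean squared error satisfies $$\mathrm{MSE}(S,Q)=\mathrm{CL}+\mathrm{GL}\ \ge\ \ell^2\text{-}\mathrm{ECE}_B+\mathcal{L}_{\mathrm{GL}_B}-\mathbb{E}\Big[\sqrt{\mathrm{Var}(S\mid S_B)}\big(2\sqrt{\mathrm{Var}(C\mid S_B)}-\sqrt{\mathrm{Var}(S\mid S_B)}\big)\Big]$$ $$\ge\ \ell^2\text{-}\mathrm{ECE}_B+\mathcal{L}_{\mathrm{GL}_B}-\mathbb{E}\Big[\sqrt{\mathrm{Var}(S\mid S_B)}\big(2\sqrt{C_B(1-C_B)}-\sqrt{\mathrm{Var}(S\mid S_B)}\big)\Big],$$ and, with $N$ equal-width bins, $\mathrm{MSE}(S,Q)\ge\ell^2\text{-}\mathrm{ECE}_B+\mathcal{L}_{\mathrm{GL}_B}-\frac1N\mathbb{E}\big[\sqrt{C_B(1-C_B)}\big]$.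
   Context: Binary setting: $(X,Y)$ jointly distributed with $X\in\mathcal{X}$, $Y\in\{0,1\}$; $Q:=P(Y=1\mid X)$; $S=f(X)\in[0,1]$ is a classifier's confidence for the positive class; $C:=\mathbb{E}[Q\mid S]$. $\mathrm{MSE}(S,Q):=\mathbb{E}[(S-Q)^2]$, $\mathrm{CL}:=\mathbb{E}[(S-C)^2]$, $\mathrm{GL}:=\mathbb{E}[(C-Q)^2]$. Given a partition of $[0,1]$ into interval bins $\mathcal{B}_j$, $S_B$ equals $\mathbb{E}[S\mid S\in\mathcal{B}_j]$ on $\{S\in\mathcal{B}_j\}$, $C_B:=\mathbb{E}[Q\mid S_B]$. $\ell^2\text{-}\mathrm{ECE}_B:=\mathbb{E}[(S_B-C_B)^2]$ is the $\ell^2$ expected calibration error of the binned classifier, and $\mathcal{L}_{\mathrm{GL}_B}:=\mathbb{E}[\mathrm{Var}(\mathbb{E}[Q\mid S_B,\mathscr{R}]\mid S_B)]$ is the grouping loss lower bound of $S_B$ for a partition $\mathscr{R}:\mathcal{X}\to\mathbb{N}$ of the feature space (with $\mathscr{R}=\mathscr{R}(X)$). $\mathrm{Var}(\cdot\mid S_B)$ is the ordinary conditional variance. "$N$ equal-width bins" means the bins are the intervals of length $1/N$ partitioning $[0,1]$. *)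

theory Defs
  imports "HOL-Probability.Probability"
begin

definition gen :: "'a measure \<Rightarrow> 'b measure \<Rightarrow> ('a \<Rightarrow> 'b) \<Rightarrow> 'a measure" where
  "gen M N g = vimage_algebra (space M) g N"

definition cond_var :: "'a measure \<Rightarrow> 'a measure \<Rightarrow> ('a \<Rightarrow> real) \<Rightarrow> 'a \<Rightarrow> real" where
  "cond_var M F f = real_cond_exp M F (\<lambda>\<omega>. (f \<omega> - real_cond_exp M F f \<omega>)\<^sup>2)"

definition interval_partition :: "(nat \<Rightarrow> real set) \<Rightarrow> nat set \<Rightarrow> bool" where
  "interval_partition B J \<longleftrightarrow>
     (\<forall>j\<in>J. B j \<noteq> {} \<and> is_interval (B j)) \<and> disjoint_family_on B J \<and> (\<Union>j\<in>J. B j) = {0..1}"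

definition eq_bins :: "nat \<Rightarrow> nat \<Rightarrow> real set" where
  "eq_bins N j = (if j + 1 < N then {real j / real N ..< real (j + 1) / real N}
                  else {real j / real N .. real (j + 1) / real N})"

(* binned classifier S_B: on {S \<in> B j} it equals E[S | S \<in> B j] *)
definition binned :: "'a measure \<Rightarrow> (nat \<Rightarrow> real set) \<Rightarrow> nat set \<Rightarrow> ('a \<Rightarrow> real) \<Rightarrow> 'a \<Rightarrow> real" where
  "binned M B J S \<omega> =
     (let j = (THE j. j \<in> J \<and> S \<omega> \<in> B j);
          E = {\<omega>' \<in> space M. S \<omega>' \<in> B j}
      in (\<integral>\<omega>'. indicator E \<omega>' * S \<omega>' \<partial>M) / measure M E)"

definition bin_sigma :: "'a measure \<Rightarrow> (nat \<Rightarrow> real set) \<Rightarrow> nat set \<Rightarrow> ('a \<Rightarrow> real) \<Rightarrow> 'a measure" where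
  "bin_sigma M B J S = gen M borel (binned M B J S)"

definition bin_calib :: "'a measure \<Rightarrow> (nat \<Rightarrow> real set) \<Rightarrow> nat set \<Rightarrow> ('a \<Rightarrow> real) \<Rightarrow> ('a \<Rightarrow> real) \<Rightarrow> 'a \<Rightarrow> real" where
  "bin_calib M B J S Q = real_cond_exp M (bin_sigma M B J S) Q"

definition MSE :: "'a measure \<Rightarrow> ('a \<Rightarrow> real) \<Rightarrow> ('a \<Rightarrow> real) \<Rightarrow> real" where
  "MSE M S Q = (\<integral>\<omega>. (S \<omega> - Q \<omega>)\<^sup>2 \<partial>M)"

definition calib :: "'a measure \<Rightarrow> ('a \<Rightarrow> real) \<Rightarrow> ('a \<Rightarrow> real) \<Rightarrow> 'a \<Rightarrow> real" where
  "calib M S Q = real_cond_exp M (gen M borel S) Q"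

definition CL :: "'a measure \<Rightarrow> ('a \<Rightarrow> real) \<Rightarrow> ('a \<Rightarrow> real) \<Rightarrow> real" where
  "CL M S Q = (\<integral>\<omega>. (S \<omega> - calib M S Q \<omega>)\<^sup>2 \<partial>M)"

definition GL :: "'a measure \<Rightarrow> ('a \<Rightarrow> real) \<Rightarrow> ('a \<Rightarrow> real) \<Rightarrow> real" where
  "GL M S Q = (\<integral>\<omega>. (calib M S Q \<omega> - Q \<omega>)\<^sup>2 \<partial>M)"

definition ece_B :: "'a measure \<Rightarrow> (nat \<Rightarrow> real set) \<Rightarrow> nat set \<Rightarrow> ('a \<Rightarrow> real) \<Rightarrow> ('a \<Rightarrow> real) \<Rightarrow> real" where
  "ece_B M B J S Q = (\<integral>\<omega>. (binned M B J S \<omega> - bin_calib M B J S Q \<omega>)\<^sup>2 \<partial>M)"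

(* grouping loss lower bound E[Var(E[Q | S_B, R] | S_B)]; Rw = R(X) as a random variable *)
definition GL_lower :: "'a measure \<Rightarrow> (nat \<Rightarrow> real set) \<Rightarrow> nat set \<Rightarrow> ('a \<Rightarrow> real) \<Rightarrow> ('a \<Rightarrow> real)
                        \<Rightarrow> ('a \<Rightarrow> nat) \<Rightarrow> real" where
  "GL_lower M B J S Q Rw =
     (\<integral>\<omega>. cond_var M (bin_sigma M B J S)
              (real_cond_exp M (gen M (borel \<Otimes>\<^sub>M count_space UNIV) (\<lambda>\<omega>'. (binned M B J S \<omega>', Rw \<omega>'))) Q) \<omega> \<partial>M)"

end

theory Submission
  imports Defs
begin

text \<open>
  Since \<open>C = E[Q | S]\<close> is the orthogonal projection of \<open>Q\<close> onto the \<open>\<sigma>(S)\<close>-measurable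
  functions and \<open>S\<close> is one of them, \<open>MSE = CL + GL\<close> is Pythagoras' theorem.
  Projecting the calibration error \<open>S - C\<close> further onto \<open>\<sigma>(S\<^sub>B)\<close> splits \<open>CL\<close> into
  \<open>ECE\<^sub>B\<close> and \<open>E[Var(S - C | S\<^sub>B)]\<close>, and by the conditional Cauchy-Schwarz inequality the
  latter is at least \<open>E[(sd(S | S\<^sub>B) - sd(C | S\<^sub>B))\<^sup>2]\<close>. By the law of total variance,
  \<open>GL + E[Var(C | S\<^sub>B)] = E[(Q - C\<^sub>B)\<^sup>2]\<close>, and this dominates
  \<open>E[Var(E[Q | S\<^sub>B, R] | S\<^sub>B)]\<close>; expanding the square gives the first inequality.
  The second one is \<open>Var(C | S\<^sub>B) \<le> C\<^sub>B (1 - C\<^sub>B)\<close>, which holds since \<open>0 \<le> C \<le> 1\<close>.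
  If every bin has width \<open>w\<close>, then \<open>S\<close> stays within \<open>w / 2\<close> of the midpoint of its bin,
  so \<open>Var(S | S\<^sub>B) \<le> w\<^sup>2 / 4\<close> and the correction term is at most
  \<open>w E[sqrt (C\<^sub>B (1 - C\<^sub>B))]\<close>; equal-width bins have \<open>w = 1 / N\<close>.
\<close>

text \<open>Essential boundedness stands in for square integrability: it is closed under products,
  so all integrability side conditions below are discharged by \<open>ae_bounded_intros\<close>.\<close>
definition ae_bounded :: "'a measure \<Rightarrow> ('a \<Rightarrow> real) \<Rightarrow> bool" where
  "ae_bounded M f \<longleftrightarrow> f \<in> borel_measurable M \<and> (\<exists>c. AE x in M. \<bar>f x\<bar> \<le> c)"

lemma ae_boundedI: "f \<in> borel_measurable M \<Longrightarrow> AE x in M. \<bar>f x\<bar> \<le> c \<Longrightarrow> ae_bounded M f"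
  unfolding ae_bounded_def by blast

lemma ae_bounded_measurable: "ae_bounded M f \<Longrightarrow> f \<in> borel_measurable M"
  unfolding ae_bounded_def by blast

lemma ae_bounded_const: "ae_bounded M (\<lambda>x. c)"
  by (rule ae_boundedI[where c="\<bar>c\<bar>"]) auto

lemma ae_bounded_add:
  assumes "ae_bounded M f" "ae_bounded M g"
  shows "ae_bounded M (\<lambda>x. f x + g x)"
  using assms unfolding ae_bounded_def
proof (elim conjE exE, intro conjI exI)
  fix c d assume "AE x in M. \<bar>f x\<bar> \<le> c" "AE x in M. \<bar>g x\<bar> \<le> d"
  then show "AE x in M. \<bar>f x + g x\<bar> \<le> c + d" by eventually_elim linarith
qed auto

lemma ae_bounded_mult:
  assumes "ae_bounded M f" "ae_bounded M g"
  shows "ae_bounded M (\<lambda>x. f x * g x)"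
  using assms unfolding ae_bounded_def
proof (elim conjE exE, intro conjI exI)
  fix c d assume "AE x in M. \<bar>f x\<bar> \<le> c" "AE x in M. \<bar>g x\<bar> \<le> d"
  then show "AE x in M. \<bar>f x * g x\<bar> \<le> c * d"
    by eventually_elim (auto simp: abs_mult intro: mult_mono order_trans[OF abs_ge_zero])
qed auto

lemma ae_bounded_minus: "ae_bounded M f \<Longrightarrow> ae_bounded M (\<lambda>x. - f x)"
  unfolding ae_bounded_def by auto

lemma ae_bounded_diff: "ae_bounded M f \<Longrightarrow> ae_bounded M g \<Longrightarrow> ae_bounded M (\<lambda>x. f x - g x)"
  using ae_bounded_add[OF _ ae_bounded_minus] by simp

lemma ae_bounded_power2: "ae_bounded M f \<Longrightarrow> ae_bounded M (\<lambda>x. (f x)\<^sup>2)"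
  using ae_bounded_mult[of M f f] by (simp add: power2_eq_square)

lemma ae_bounded_sqrt:
  assumes "ae_bounded M f"
  shows "ae_bounded M (\<lambda>x. sqrt (f x))"
  using assms unfolding ae_bounded_def
proof (elim conjE exE, intro conjI exI)
  fix c assume "AE x in M. \<bar>f x\<bar> \<le> c"
  then show "AE x in M. \<bar>sqrt (f x)\<bar> \<le> sqrt c"
  proof eventually_elim
    case (elim x)
    have "\<bar>sqrt (f x)\<bar> = sqrt \<bar>f x\<bar>" by (cases "f x \<ge> 0") (auto simp: real_sqrt_minus)
    with elim show ?case by simp
  qed
qed auto

lemma ae_bounded_AE_cong:
  assumes "ae_bounded M f" "g \<in> borel_measurable M" "AE x in M. f x = g x"
  shows "ae_bounded M g"
proof -
  obtain c where "AE x in M. \<bar>f x\<bar> \<le> c"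
    using assms unfolding ae_bounded_def by blast
  with assms(3) have "AE x in M. \<bar>g x\<bar> \<le> c" by eventually_elim simp
  with assms(2) show ?thesis by (rule ae_boundedI)
qed

lemmas ae_bounded_intros =
  ae_bounded_const ae_bounded_add ae_bounded_mult ae_bounded_minus ae_bounded_diff
  ae_bounded_power2 ae_bounded_sqrt

lemma (in finite_measure) integrable_ae_bounded:
  assumes "ae_bounded M f"
  shows "integrable M f"
proof -
  obtain c where "AE x in M. \<bar>f x\<bar> \<le> c"
    using assms unfolding ae_bounded_def by blast
  then show ?thesis
    using ae_bounded_measurable[OF assms] by (intro integrable_const_bound[where B=c]) auto
qed

lemma measurable_gen: "g \<in> space M \<rightarrow> space N \<Longrightarrow> g \<in> measurable (gen M N g) N"
  unfolding gen_def by (rule measurable_vimage_algebra1)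

lemma subalgebra_gen:
  assumes K: "subalgebra M K" and g: "g \<in> measurable K N"
  shows "subalgebra K (gen M N g)"
proof -
  have space: "space K = space M" using K by (simp add: subalgebra_def)
  have g_space: "g \<in> space M \<rightarrow> space N" using g space by (auto simp: measurable_def)
  have "sets (gen M N g) \<subseteq> sets K"
    using measurable_sets[OF g] space
    unfolding gen_def sets_vimage_algebra2[OF g_space] by auto
  then show ?thesis using space by (simp add: subalgebra_def gen_def)
qed

lemma subalgebra_refl: "subalgebra M M"
  by (simp add: subalgebra_def)

lemma subalgebra_trans: "subalgebra M G \<Longrightarrow> subalgebra G F \<Longrightarrow> subalgebra M F"
  by (auto simp: subalgebra_def)

lemma (in prob_space) sigma_finite_subalgebraI: "subalgebra M F \<Longrightarrow> sigma_finite_subalgebra M F"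
  by (intro finite_measure_subalgebra_is_sigma_finite)
     (simp add: finite_measure_subalgebra_def finite_measure_subalgebra_axioms_def finite_measure_axioms)

lemma (in prob_space) ae_bounded_cond_exp:
  assumes F: "subalgebra M F" and f: "ae_bounded M f"
  shows "ae_bounded M (real_cond_exp M F f)"
proof -
  interpret sigma_finite_subalgebra M F using sigma_finite_subalgebraI[OF F] .
  obtain c where c: "AE x in M. \<bar>f x\<bar> \<le> c"
    using f unfolding ae_bounded_def by blast
  have "AE x in M. real_cond_exp M F f x \<le> c"
    by (rule real_cond_exp_le_c) (use c integrable_ae_bounded[OF f] in auto)
  moreover have "AE x in M. real_cond_exp M F f x \<ge> -c"
    by (rule real_cond_exp_ge_c) (use c integrable_ae_bounded[OF f] in auto)
  ultimately have "AE x in M. \<bar>real_cond_exp M F f x\<bar> \<le> c" by eventually_elim simp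
  then show ?thesis by (intro ae_boundedI borel_measurable_cond_exp2)
qed

section \<open>Conditional expectation and conditional variance\<close>

lemma (in prob_space) integral_sq_diff_cond_exp:
  assumes F: "subalgebra M F" and h: "ae_bounded M h" and g: "ae_bounded M g"
    and g_F: "g \<in> borel_measurable F"
  shows "(\<integral>x. (h x - g x)\<^sup>2 \<partial>M)
    = (\<integral>x. (h x - real_cond_exp M F h x)\<^sup>2 \<partial>M) + (\<integral>x. (real_cond_exp M F h x - g x)\<^sup>2 \<partial>M)"
proof -
  interpret sigma_finite_subalgebra M F using sigma_finite_subalgebraI[OF F] .
  define e where "e = real_cond_exp M F h"
  have e: "ae_bounded M e" unfolding e_def using ae_bounded_cond_exp[OF F h] .
  have [measurable]: "h \<in> borel_measurable M" "g \<in> borel_measurable F" "e \<in> borel_measurable F"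
    using h g_F by (auto simp: e_def ae_bounded_measurable)
  have "(\<integral>x. (e x - g x) * e x \<partial>M) = (\<integral>x. (e x - g x) * h x \<partial>M)"
    unfolding e_def by (rule real_cond_exp_intg(2))
      (auto simp: e_def[symmetric] intro!: integrable_ae_bounded ae_bounded_intros e g h)
  then have cross: "(\<integral>x. (e x - g x) * (h x - e x) \<partial>M) = 0"
    by (simp add: right_diff_distrib Bochner_Integration.integral_diff
        integrable_ae_bounded ae_bounded_intros e g h)
  have "(\<integral>x. (h x - g x)\<^sup>2 \<partial>M)
      = (\<integral>x. (h x - e x)\<^sup>2 + (e x - g x)\<^sup>2 + 2 * ((e x - g x) * (h x - e x)) \<partial>M)"
    by (rule Bochner_Integration.integral_cong) (auto simp: power2_eq_square algebra_simps)
  also have "\<dots> = (\<integral>x. (h x - e x)\<^sup>2 \<partial>M) + (\<integral>x. (e x - g x)\<^sup>2 \<partial>M)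
      + 2 * (\<integral>x. (e x - g x) * (h x - e x) \<partial>M)"
    by (simp add: Bochner_Integration.integral_add integrable_ae_bounded ae_bounded_intros e g h)
  finally show ?thesis using cross unfolding e_def by simp
qed

lemma (in prob_space) integral_sq_eq_cond_exp_plus_cond_var:
  assumes F: "subalgebra M F" and h: "ae_bounded M h"
  shows "(\<integral>x. (h x)\<^sup>2 \<partial>M) = (\<integral>x. (real_cond_exp M F h x)\<^sup>2 \<partial>M) + (\<integral>x. cond_var M F h x \<partial>M)"
proof -
  interpret sigma_finite_subalgebra M F using sigma_finite_subalgebraI[OF F] .
  have "(\<integral>x. cond_var M F h x \<partial>M) = (\<integral>x. (h x - real_cond_exp M F h x)\<^sup>2 \<partial>M)"
    unfolding cond_var_def
    by (intro real_cond_exp_int(2) integrable_ae_bounded ae_bounded_intros h ae_bounded_cond_exp[OF F])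
  then show ?thesis
    using integral_sq_diff_cond_exp[OF F h ae_bounded_const[of M 0]] by simp
qed

lemma (in prob_space) ae_bounded_cond_var:
  assumes F: "subalgebra M F" and f: "ae_bounded M f"
  shows "ae_bounded M (cond_var M F f)"
  unfolding cond_var_def by (intro ae_bounded_cond_exp[OF F] ae_bounded_intros f)

lemma (in prob_space) cond_var_nonneg:
  assumes F: "subalgebra M F" and f: "ae_bounded M f"
  shows "AE x in M. 0 \<le> cond_var M F f x"
proof -
  interpret sigma_finite_subalgebra M F using sigma_finite_subalgebraI[OF F] .
  have [measurable]: "f \<in> borel_measurable M" using f by (rule ae_bounded_measurable)
  show ?thesis unfolding cond_var_def by (rule real_cond_exp_pos) auto
qed

lemma (in prob_space) cond_exp_sq_diff:
  assumes F: "subalgebra M F" and f: "ae_bounded M f" and c: "ae_bounded M c"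
    and c_F: "c \<in> borel_measurable F"
  shows "AE x in M. real_cond_exp M F (\<lambda>x. (f x - c x)\<^sup>2) x
    = real_cond_exp M F (\<lambda>x. (f x)\<^sup>2) x - 2 * c x * real_cond_exp M F f x + (c x)\<^sup>2"
proof -
  interpret sigma_finite_subalgebra M F using sigma_finite_subalgebraI[OF F] .
  have [measurable]: "f \<in> borel_measurable M" "c \<in> borel_measurable F"
    using f c_F by (auto simp: ae_bounded_measurable)
  have expand: "(\<lambda>x. (f x - c x)\<^sup>2) = (\<lambda>x. ((f x)\<^sup>2 - 2 * c x * f x) + (c x)\<^sup>2)"
    by (simp add: fun_eq_iff power2_eq_square algebra_simps)
  have "AE x in M. real_cond_exp M F (\<lambda>x. ((f x)\<^sup>2 - 2 * c x * f x) + (c x)\<^sup>2) x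
      = real_cond_exp M F (\<lambda>x. (f x)\<^sup>2 - 2 * c x * f x) x + real_cond_exp M F (\<lambda>x. (c x)\<^sup>2) x"
    by (intro real_cond_exp_add integrable_ae_bounded ae_bounded_intros f c)
  moreover have "AE x in M. real_cond_exp M F (\<lambda>x. (f x)\<^sup>2 - 2 * c x * f x) x
      = real_cond_exp M F (\<lambda>x. (f x)\<^sup>2) x - real_cond_exp M F (\<lambda>x. 2 * c x * f x) x"
    by (intro real_cond_exp_diff integrable_ae_bounded ae_bounded_intros f c)
  moreover have "AE x in M. real_cond_exp M F (\<lambda>x. 2 * c x * f x) x = 2 * c x * real_cond_exp M F f x"
    by (rule real_cond_exp_mult) (auto intro!: integrable_ae_bounded ae_bounded_intros f c)
  moreover have "AE x in M. real_cond_exp M F (\<lambda>x. (c x)\<^sup>2) x = (c x)\<^sup>2"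
    by (intro real_cond_exp_F_meas integrable_ae_bounded ae_bounded_intros c) measurable
  ultimately show ?thesis unfolding expand by eventually_elim simp
qed

lemma (in prob_space) cond_var_eq:
  assumes F: "subalgebra M F" and f: "ae_bounded M f"
  shows "AE x in M. cond_var M F f x
    = real_cond_exp M F (\<lambda>x. (f x)\<^sup>2) x - (real_cond_exp M F f x)\<^sup>2"
proof -
  interpret sigma_finite_subalgebra M F using sigma_finite_subalgebraI[OF F] .
  show ?thesis
    using cond_exp_sq_diff[OF F f ae_bounded_cond_exp[OF F f] borel_measurable_cond_exp]
    unfolding cond_var_def by eventually_elim (simp add: power2_eq_square)
qed

lemma (in prob_space) cond_var_le_cond_exp_sq_diff:
  assumes F: "subalgebra M F" and f: "ae_bounded M f" and c: "ae_bounded M c"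
    and c_F: "c \<in> borel_measurable F"
  shows "AE x in M. cond_var M F f x \<le> real_cond_exp M F (\<lambda>x. (f x - c x)\<^sup>2) x"
  using cond_exp_sq_diff[OF F f c c_F] cond_var_eq[OF F f]
proof eventually_elim
  case (elim x)
  have "0 \<le> (real_cond_exp M F f x - c x)\<^sup>2" by simp
  with elim show ?case by (simp add: power2_eq_square algebra_simps)
qed

lemma (in prob_space) cond_var_le_cond_exp_one_minus:
  assumes F: "subalgebra M F" and f: "ae_bounded M f" and f01: "AE x in M. 0 \<le> f x \<and> f x \<le> 1"
  shows "AE x in M. cond_var M F f x \<le> real_cond_exp M F f x * (1 - real_cond_exp M F f x)"
proof -
  interpret sigma_finite_subalgebra M F using sigma_finite_subalgebraI[OF F] .
  have "AE x in M. (f x)\<^sup>2 \<le> f x"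
    using f01 by eventually_elim (auto simp: power2_eq_square intro: mult_left_le)
  then have "AE x in M. real_cond_exp M F (\<lambda>x. (f x)\<^sup>2) x \<le> real_cond_exp M F f x"
    by (intro real_cond_exp_mono integrable_ae_bounded ae_bounded_intros f)
  with cond_var_eq[OF F f] show ?thesis
    by eventually_elim (simp add: power2_eq_square algebra_simps)
qed

lemma (in prob_space) cond_var_nested_subalg:
  assumes G: "subalgebra M G" and GF: "subalgebra G F" and f: "ae_bounded M f"
    and same_mean: "AE x in M. real_cond_exp M G f x = real_cond_exp M F f x"
  shows "AE x in M. real_cond_exp M F (cond_var M G f) x = cond_var M F f x"
proof -
  have F: "subalgebra M F" using subalgebra_trans[OF G GF] .
  interpret sigma_finite_subalgebra M F using sigma_finite_subalgebraI[OF F] .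
  interpret G: sigma_finite_subalgebra M G using sigma_finite_subalgebraI[OF G] .
  have [measurable]: "f \<in> borel_measurable M" using f by (rule ae_bounded_measurable)
  have "AE x in M. real_cond_exp M F (cond_var M G f) x
      = real_cond_exp M F (\<lambda>x. (f x - real_cond_exp M G f x)\<^sup>2) x"
    unfolding cond_var_def
    by (intro real_cond_exp_nested_subalg G GF integrable_ae_bounded ae_bounded_intros f
        ae_bounded_cond_exp[OF G])
  moreover have "AE x in M. real_cond_exp M F (\<lambda>x. (f x - real_cond_exp M G f x)\<^sup>2) x
      = cond_var M F f x"
    unfolding cond_var_def by (rule real_cond_exp_cong) (use same_mean in auto)
  ultimately show ?thesis by eventually_elim simp
qed

lemma (in prob_space) integral_sq_diff_cond_exp_nested:
  assumes G: "subalgebra M G" and GF: "subalgebra G F" and f: "ae_bounded M f"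
  shows "(\<integral>x. (f x - real_cond_exp M F f x)\<^sup>2 \<partial>M)
    = (\<integral>x. (f x - real_cond_exp M G f x)\<^sup>2 \<partial>M) + (\<integral>x. cond_var M F (real_cond_exp M G f) x \<partial>M)"
proof -
  have F: "subalgebra M F" using subalgebra_trans[OF G GF] .
  interpret sigma_finite_subalgebra M F using sigma_finite_subalgebraI[OF F] .
  define e where "e = real_cond_exp M G f"
  have e: "ae_bounded M e" unfolding e_def using ae_bounded_cond_exp[OF G f] .
  have [measurable]: "e \<in> borel_measurable M" using e by (rule ae_bounded_measurable)
  have tower: "AE x in M. real_cond_exp M F e x = real_cond_exp M F f x"
    unfolding e_def by (intro real_cond_exp_nested_subalg G GF integrable_ae_bounded f)
  have "(\<integral>x. cond_var M F e x \<partial>M) = (\<integral>x. (e x - real_cond_exp M F e x)\<^sup>2 \<partial>M)"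
    unfolding cond_var_def
    by (intro real_cond_exp_int(2) integrable_ae_bounded ae_bounded_intros e ae_bounded_cond_exp[OF F])
  also have "\<dots> = (\<integral>x. (e x - real_cond_exp M F f x)\<^sup>2 \<partial>M)"
  proof (rule integral_cong_AE)
    show "AE x in M. (e x - real_cond_exp M F e x)\<^sup>2 = (e x - real_cond_exp M F f x)\<^sup>2"
      using tower by eventually_elim simp
  qed measurable
  finally show ?thesis
    using integral_sq_diff_cond_exp[OF G f ae_bounded_cond_exp[OF F f]
        measurable_from_subalg[OF GF borel_measurable_cond_exp]]
    unfolding e_def by simp
qed

lemma (in prob_space) cond_exp_unit_interval:
  assumes F: "subalgebra M F" and f: "ae_bounded M f" and f01: "AE x in M. 0 \<le> f x \<and> f x \<le> 1"
  shows "AE x in M. 0 \<le> real_cond_exp M F f x \<and> real_cond_exp M F f x \<le> 1"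
proof -
  interpret sigma_finite_subalgebra M F using sigma_finite_subalgebraI[OF F] .
  have "AE x in M. 0 \<le> real_cond_exp M F f x"
    using f01 by (intro real_cond_exp_ge_c integrable_ae_bounded f) auto
  moreover have "AE x in M. real_cond_exp M F f x \<le> 1"
    using f01 by (intro real_cond_exp_le_c integrable_ae_bounded f) auto
  ultimately show ?thesis by eventually_elim simp
qed

section \<open>Conditional Cauchy-Schwarz inequality\<close>

lemma ae_bounded_divide_add_pos:
  assumes "ae_bounded M f" "ae_bounded M g" "AE x in M. 0 \<le> g x" "0 < e"
  shows "ae_bounded M (\<lambda>x. f x / (g x + e))"
  using assms(1,2) unfolding ae_bounded_def
proof (elim conjE exE, intro conjI exI)
  fix c assume "AE x in M. \<bar>f x\<bar> \<le> c"
  with assms(3) show "AE x in M. \<bar>f x / (g x + e)\<bar> \<le> c / e"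
  proof eventually_elim
    case (elim x)
    then have "\<bar>f x\<bar> / (g x + e) \<le> c / e"
      using \<open>0 < e\<close> by (intro frac_le) auto
    with elim \<open>0 < e\<close> show ?case by simp
  qed
qed auto

lemma two_mult_le_weighted_squares:
  fixes a b l m :: real
  assumes "l * m = 1" "0 \<le> m"
  shows "2 * (a * b) \<le> l * a\<^sup>2 + m * b\<^sup>2"
proof -
  have "l * a\<^sup>2 + m * b\<^sup>2 - 2 * (a * b) = m * (l * a - b)\<^sup>2"
    using assms(1) by (simp add: power2_eq_square algebra_simps)
  also have "\<dots> \<ge> 0" using assms(2) by simp
  finally show ?thesis by simp
qed

lemma shifted_weights_le:
  fixes u v e :: real
  assumes "0 \<le> u" "0 \<le> v" "0 < e"
  shows "(v + e) / (u + e) * u\<^sup>2 + (u + e) / (v + e) * v\<^sup>2 \<le> 2 * (u * v) + e * (u + v)"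
proof -
  have u: "u\<^sup>2 / (u + e) \<le> u" and v: "v\<^sup>2 / (v + e) \<le> v"
    using assms by (simp_all add: divide_le_eq power2_eq_square algebra_simps)
  have "(v + e) * (u\<^sup>2 / (u + e)) \<le> (v + e) * u"
    by (rule mult_left_mono[OF u]) (use assms in simp)
  moreover have "(u + e) * (v\<^sup>2 / (v + e)) \<le> (u + e) * v"
    by (rule mult_left_mono[OF v]) (use assms in simp)
  ultimately show ?thesis by (simp add: algebra_simps)
qed

lemma (in prob_space) integral_sq_diff_expand:
  assumes "ae_bounded M a" "ae_bounded M b"
  shows "(\<integral>x. (a x - b x)\<^sup>2 \<partial>M)
    = (\<integral>x. (a x)\<^sup>2 \<partial>M) + (\<integral>x. (b x)\<^sup>2 \<partial>M) - 2 * (\<integral>x. a x * b x \<partial>M)"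
proof -
  have "(\<integral>x. (a x - b x)\<^sup>2 \<partial>M) = (\<integral>x. ((a x)\<^sup>2 + (b x)\<^sup>2) - 2 * (a x * b x) \<partial>M)"
    by (simp add: power2_eq_square algebra_simps)
  then show ?thesis
    by (simp add: Bochner_Integration.integral_diff Bochner_Integration.integral_add
        integrable_ae_bounded ae_bounded_intros assms)
qed

lemma (in prob_space) integral_mult_le_cond_weighted:
  assumes F: "subalgebra M F" and a: "ae_bounded M a" and b: "ae_bounded M b"
    and lm: "ae_bounded M l" "ae_bounded M m" "l \<in> borel_measurable F" "m \<in> borel_measurable F"
    and lm_inverse: "AE x in M. l x * m x = 1 \<and> 0 \<le> m x"
  shows "2 * (\<integral>x. a x * b x \<partial>M) \<le> (\<integral>x. l x * real_cond_exp M F (\<lambda>x. (a x)\<^sup>2) x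
    + m x * real_cond_exp M F (\<lambda>x. (b x)\<^sup>2) x \<partial>M)"
proof -
  interpret sigma_finite_subalgebra M F using sigma_finite_subalgebraI[OF F] .
  have [measurable]: "a \<in> borel_measurable M" "b \<in> borel_measurable M"
    using a b by (auto intro: ae_bounded_measurable)
  have "AE x in M. 2 * (a x * b x) \<le> l x * (a x)\<^sup>2 + m x * (b x)\<^sup>2"
    using lm_inverse by eventually_elim (auto intro: two_mult_le_weighted_squares)
  then have "(\<integral>x. 2 * (a x * b x) \<partial>M) \<le> (\<integral>x. l x * (a x)\<^sup>2 + m x * (b x)\<^sup>2 \<partial>M)"
    by (intro integral_mono_AE integrable_ae_bounded ae_bounded_intros lm a b)
  then show ?thesis
    using lm(3,4) by (simp add: real_cond_exp_intg(2) Bochner_Integration.integral_add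
        integrable_ae_bounded ae_bounded_intros ae_bounded_cond_exp[OF F] lm a b)
qed

text \<open>The weights \<open>l\<close>, \<open>m\<close> approximate the optimal pointwise weights \<open>v / u\<close>, \<open>u / v\<close>
  of the inequality \<open>2 a b \<le> l a\<^sup>2 + b\<^sup>2 / l\<close>; the shift by \<open>e\<close> keeps them bounded.\<close>

lemma (in prob_space) cond_cauchy_schwarz_approx:
  assumes F: "subalgebra M F" and a: "ae_bounded M a" and b: "ae_bounded M b" and e: "0 < e"
  defines "u \<equiv> \<lambda>x. sqrt (real_cond_exp M F (\<lambda>x. (a x)\<^sup>2) x)"
    and "v \<equiv> \<lambda>x. sqrt (real_cond_exp M F (\<lambda>x. (b x)\<^sup>2) x)"
  shows "2 * (\<integral>x. a x * b x \<partial>M) \<le> 2 * (\<integral>x. u x * v x \<partial>M) + e * ((\<integral>x. u x \<partial>M) + (\<integral>x. v x \<partial>M))"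
proof -
  interpret sigma_finite_subalgebra M F using sigma_finite_subalgebraI[OF F] .
  define A where "A = real_cond_exp M F (\<lambda>x. (a x)\<^sup>2)"
  define B where "B = real_cond_exp M F (\<lambda>x. (b x)\<^sup>2)"
  define l where "l x = (v x + e) / (u x + e)" for x
  define m where "m x = (u x + e) / (v x + e)" for x
  have [measurable]: "a \<in> borel_measurable M" "b \<in> borel_measurable M"
    using a b by (auto intro: ae_bounded_measurable)
  have lm_F: "l \<in> borel_measurable F" "m \<in> borel_measurable F"
    unfolding l_def m_def u_def v_def by measurable
  have AB: "ae_bounded M A" "ae_bounded M B"
    unfolding A_def B_def by (intro ae_bounded_cond_exp[OF F] ae_bounded_intros a b)+
  have uv: "ae_bounded M u" "ae_bounded M v"
    unfolding u_def v_def A_def[symmetric] B_def[symmetric] by (intro ae_bounded_intros AB)+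
  have AB_nonneg: "AE x in M. 0 \<le> A x \<and> 0 \<le> B x"
    using real_cond_exp_pos[of "\<lambda>x. (a x)\<^sup>2"] real_cond_exp_pos[of "\<lambda>x. (b x)\<^sup>2"]
    unfolding A_def B_def by auto
  have uv_nonneg: "AE x in M. 0 \<le> u x \<and> 0 \<le> v x"
    using AB_nonneg by eventually_elim (simp add: u_def v_def A_def B_def)
  have lm: "ae_bounded M l" "ae_bounded M m"
    unfolding l_def m_def using uv_nonneg e
    by (auto intro!: ae_bounded_divide_add_pos ae_bounded_intros uv)
  have "AE x in M. l x * m x = 1 \<and> 0 \<le> m x"
    using uv_nonneg unfolding l_def m_def by eventually_elim (use e in simp)
  then have "2 * (\<integral>x. a x * b x \<partial>M) \<le> (\<integral>x. l x * A x + m x * B x \<partial>M)"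
    unfolding A_def B_def by (rule integral_mult_le_cond_weighted[OF F a b lm lm_F])
  also have "\<dots> \<le> (\<integral>x. 2 * (u x * v x) + e * (u x + v x) \<partial>M)"
  proof (rule integral_mono_AE)
    show "AE x in M. l x * A x + m x * B x \<le> 2 * (u x * v x) + e * (u x + v x)"
      using AB_nonneg
    proof eventually_elim
      case (elim x)
      then have "A x = (u x)\<^sup>2" "B x = (v x)\<^sup>2" "0 \<le> u x" "0 \<le> v x"
        unfolding u_def v_def A_def B_def by auto
      then show ?case unfolding l_def m_def using shifted_weights_le e by simp
    qed
  qed (intro integrable_ae_bounded ae_bounded_intros lm AB uv)+
  also have "\<dots> = 2 * (\<integral>x. u x * v x \<partial>M) + e * ((\<integral>x. u x \<partial>M) + (\<integral>x. v x \<partial>M))"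
    by (simp add: Bochner_Integration.integral_add integrable_ae_bounded ae_bounded_intros uv)
  finally show ?thesis .
qed

lemma (in prob_space) cond_cauchy_schwarz:
  assumes F: "subalgebra M F" and a: "ae_bounded M a" and b: "ae_bounded M b"
  shows "(\<integral>x. a x * b x \<partial>M)
    \<le> (\<integral>x. sqrt (real_cond_exp M F (\<lambda>x. (a x)\<^sup>2) x) * sqrt (real_cond_exp M F (\<lambda>x. (b x)\<^sup>2) x) \<partial>M)"
    (is "?ab \<le> ?uv")
proof -
  define K where "K = (\<integral>x. sqrt (real_cond_exp M F (\<lambda>x. (a x)\<^sup>2) x) \<partial>M)
    + (\<integral>x. sqrt (real_cond_exp M F (\<lambda>x. (b x)\<^sup>2) x) \<partial>M)"
  have "((\<lambda>e. 2 * ?uv + e * K) \<longlongrightarrow> 2 * ?uv + 0 * K) (at_right 0)"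
    by (intro tendsto_intros)
  moreover have "\<forall>\<^sub>F e in at_right 0. 2 * ?ab \<le> 2 * ?uv + e * K"
    using eventually_at_right_less[of "0::real"]
    by eventually_elim (unfold K_def, rule cond_cauchy_schwarz_approx[OF F a b])
  ultimately have "2 * ?ab \<le> 2 * ?uv + 0 * K"
    by (rule tendsto_lowerbound) simp
  then show ?thesis by simp
qed

lemma (in prob_space) integral_cond_var_diff:
  assumes F: "subalgebra M F" and f: "ae_bounded M f" and g: "ae_bounded M g"
  shows "(\<integral>x. cond_var M F (\<lambda>x. f x - g x) x \<partial>M)
    = (\<integral>x. cond_var M F f x \<partial>M) + (\<integral>x. cond_var M F g x \<partial>M)
      - 2 * (\<integral>x. (f x - real_cond_exp M F f x) * (g x - real_cond_exp M F g x) \<partial>M)"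
proof -
  interpret sigma_finite_subalgebra M F using sigma_finite_subalgebraI[OF F] .
  define a where "a x = f x - real_cond_exp M F f x" for x
  define b where "b x = g x - real_cond_exp M F g x" for x
  have ab: "ae_bounded M a" "ae_bounded M b"
    unfolding a_def b_def by (intro ae_bounded_intros f g ae_bounded_cond_exp[OF F])+
  have [measurable]: "f \<in> borel_measurable M" "g \<in> borel_measurable M"
    using f g by (auto intro: ae_bounded_measurable)
  then have [measurable]: "a \<in> borel_measurable M" "b \<in> borel_measurable M"
    unfolding a_def b_def by measurable
  have "(\<integral>x. cond_var M F f x \<partial>M) = (\<integral>x. (a x)\<^sup>2 \<partial>M)"
    "(\<integral>x. cond_var M F g x \<partial>M) = (\<integral>x. (b x)\<^sup>2 \<partial>M)"
    unfolding cond_var_def a_def[symmetric] b_def[symmetric]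
    by (intro real_cond_exp_int(2) integrable_ae_bounded ae_bounded_intros ab)+
  moreover have "(\<integral>x. cond_var M F (\<lambda>x. f x - g x) x \<partial>M)
      = (\<integral>x. (f x - g x - real_cond_exp M F (\<lambda>x. f x - g x) x)\<^sup>2 \<partial>M)"
    unfolding cond_var_def
    by (intro real_cond_exp_int(2) integrable_ae_bounded ae_bounded_intros f g ae_bounded_cond_exp[OF F])
  moreover have "\<dots> = (\<integral>x. (a x - b x)\<^sup>2 \<partial>M)"
  proof (rule integral_cong_AE)
    show "AE x in M. (f x - g x - real_cond_exp M F (\<lambda>x. f x - g x) x)\<^sup>2 = (a x - b x)\<^sup>2"
      using real_cond_exp_diff[OF integrable_ae_bounded[OF f] integrable_ae_bounded[OF g]]
    proof eventually_elim
      case (elim x)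
      then have "f x - g x - real_cond_exp M F (\<lambda>x. f x - g x) x = a x - b x"
        by (simp add: a_def b_def)
      then show ?case by simp
    qed
  qed measurable
  ultimately show ?thesis
    unfolding integral_sq_diff_expand[OF ab] by (simp add: a_def b_def)
qed

lemma (in prob_space) integral_sq_diff_sqrt_cond_var_le:
  assumes F: "subalgebra M F" and f: "ae_bounded M f" and g: "ae_bounded M g"
  shows "(\<integral>x. (sqrt (cond_var M F f x) - sqrt (cond_var M F g x))\<^sup>2 \<partial>M)
    \<le> (\<integral>x. cond_var M F (\<lambda>x. f x - g x) x \<partial>M)"
proof -
  have cv: "ae_bounded M (cond_var M F f)" "ae_bounded M (cond_var M F g)"
    using ae_bounded_cond_var[OF F] f g by blast+
  have "(\<integral>x. (sqrt (cond_var M F f x))\<^sup>2 \<partial>M) = (\<integral>x. cond_var M F f x \<partial>M)"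
    "(\<integral>x. (sqrt (cond_var M F g x))\<^sup>2 \<partial>M) = (\<integral>x. cond_var M F g x \<partial>M)"
    using cond_var_nonneg[OF F f] cond_var_nonneg[OF F g]
    by (auto intro!: integral_cong_AE ae_bounded_measurable ae_bounded_intros cv)
  moreover have "(\<integral>x. (f x - real_cond_exp M F f x) * (g x - real_cond_exp M F g x) \<partial>M)
      \<le> (\<integral>x. sqrt (cond_var M F f x) * sqrt (cond_var M F g x) \<partial>M)"
    unfolding cond_var_def
    by (intro cond_cauchy_schwarz F ae_bounded_intros f g ae_bounded_cond_exp[OF F])
  ultimately show ?thesis
    unfolding integral_sq_diff_expand[OF ae_bounded_sqrt[OF cv(1)] ae_bounded_sqrt[OF cv(2)]]
      integral_cond_var_diff[OF F f g] by simp
qed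

section \<open>Calibration and grouping loss\<close>

definition binning_correction :: "'a measure \<Rightarrow> 'a measure \<Rightarrow> ('a \<Rightarrow> real) \<Rightarrow> ('a \<Rightarrow> real) \<Rightarrow> real"
  where "binning_correction M F S V =
    (\<integral>x. sqrt (cond_var M F S x) * (2 * sqrt (V x) - sqrt (cond_var M F S x)) \<partial>M)"

lemma (in prob_space) integral_sq_diff_sqrt_cond_var:
  assumes F: "subalgebra M F" and S: "ae_bounded M S" and V: "ae_bounded M V"
    and V_nonneg: "AE x in M. 0 \<le> V x"
  shows "(\<integral>x. (sqrt (cond_var M F S x) - sqrt (V x))\<^sup>2 \<partial>M)
    = (\<integral>x. V x \<partial>M) - binning_correction M F S V"
proof -
  note cv = ae_bounded_cond_var[OF F S]
  have "(\<integral>x. (sqrt (cond_var M F S x) - sqrt (V x))\<^sup>2 \<partial>M)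
      = (\<integral>x. V x - sqrt (cond_var M F S x) * (2 * sqrt (V x) - sqrt (cond_var M F S x)) \<partial>M)"
  proof (rule integral_cong_AE)
    show "AE x in M. (sqrt (cond_var M F S x) - sqrt (V x))\<^sup>2
        = V x - sqrt (cond_var M F S x) * (2 * sqrt (V x) - sqrt (cond_var M F S x))"
      using cond_var_nonneg[OF F S] V_nonneg
      by eventually_elim (simp add: power2_eq_square algebra_simps)
  qed (intro ae_bounded_measurable ae_bounded_intros cv V)+
  then show ?thesis unfolding binning_correction_def
    by (simp add: Bochner_Integration.integral_diff integrable_ae_bounded ae_bounded_intros cv V)
qed

lemma (in prob_space) calibration_grouping_bound:
  assumes Sig: "subalgebra M Sig" and Sig_F: "subalgebra Sig F"
    and H: "subalgebra M H" and H_F: "subalgebra H F"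
    and S: "ae_bounded M S" and Q: "ae_bounded M Q"
  defines "C \<equiv> real_cond_exp M Sig Q"
  shows "(\<integral>x. (S x - C x)\<^sup>2 \<partial>M) + (\<integral>x. (C x - Q x)\<^sup>2 \<partial>M)
    \<ge> (\<integral>x. (real_cond_exp M F S x - real_cond_exp M F Q x)\<^sup>2 \<partial>M)
      + (\<integral>x. cond_var M F (real_cond_exp M H Q) x \<partial>M)
      - binning_correction M F S (cond_var M F C)"
proof -
  have F: "subalgebra M F" using subalgebra_trans[OF Sig Sig_F] .
  interpret sigma_finite_subalgebra M F using sigma_finite_subalgebraI[OF F] .
  have C: "ae_bounded M C" unfolding C_def using ae_bounded_cond_exp[OF Sig Q] .
  have [measurable]: "S \<in> borel_measurable M" "C \<in> borel_measurable M" "Q \<in> borel_measurable M"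
    using S C Q by (auto intro: ae_bounded_measurable)
  have tower: "AE x in M. real_cond_exp M F C x = real_cond_exp M F Q x"
    unfolding C_def by (intro real_cond_exp_nested_subalg Sig Sig_F integrable_ae_bounded Q)
  have "(\<integral>x. (real_cond_exp M F (\<lambda>x. S x - C x) x)\<^sup>2 \<partial>M)
      = (\<integral>x. (real_cond_exp M F S x - real_cond_exp M F Q x)\<^sup>2 \<partial>M)"
  proof (rule integral_cong_AE)
    show "AE x in M. (real_cond_exp M F (\<lambda>x. S x - C x) x)\<^sup>2
        = (real_cond_exp M F S x - real_cond_exp M F Q x)\<^sup>2"
      using real_cond_exp_diff[OF integrable_ae_bounded[OF S] integrable_ae_bounded[OF C]] tower
      by eventually_elim simp
  qed measurable
  then have CL: "(\<integral>x. (S x - C x)\<^sup>2 \<partial>M)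
      = (\<integral>x. (real_cond_exp M F S x - real_cond_exp M F Q x)\<^sup>2 \<partial>M)
        + (\<integral>x. cond_var M F (\<lambda>x. S x - C x) x \<partial>M)"
    using integral_sq_eq_cond_exp_plus_cond_var[OF F ae_bounded_diff[OF S C]] by simp
  have sd: "(\<integral>x. cond_var M F C x \<partial>M) - binning_correction M F S (cond_var M F C)
      \<le> (\<integral>x. cond_var M F (\<lambda>x. S x - C x) x \<partial>M)"
    using integral_sq_diff_sqrt_cond_var_le[OF F S C]
      integral_sq_diff_sqrt_cond_var[OF F S ae_bounded_cond_var[OF F C] cond_var_nonneg[OF F C]]
    by simp
  have GL: "(\<integral>x. (Q x - real_cond_exp M F Q x)\<^sup>2 \<partial>M)
      = (\<integral>x. (C x - Q x)\<^sup>2 \<partial>M) + (\<integral>x. cond_var M F C x \<partial>M)"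
    using integral_sq_diff_cond_exp_nested[OF Sig Sig_F Q] unfolding C_def
    by (simp add: power2_commute)
  have GL_lower: "(\<integral>x. (Q x - real_cond_exp M F Q x)\<^sup>2 \<partial>M)
      \<ge> (\<integral>x. cond_var M F (real_cond_exp M H Q) x \<partial>M)"
    using integral_sq_diff_cond_exp_nested[OF H H_F Q] by simp
  show ?thesis using CL sd GL GL_lower by linarith
qed

lemma (in prob_space) binning_correction_mono:
  assumes F: "subalgebra M F" and S: "ae_bounded M S" and V: "ae_bounded M V" "ae_bounded M V'"
    and le: "AE x in M. 0 \<le> V x \<and> V x \<le> V' x"
  shows "binning_correction M F S V \<le> binning_correction M F S V'"
  unfolding binning_correction_def
proof (rule integral_mono_AE)
  show "AE x in M. sqrt (cond_var M F S x) * (2 * sqrt (V x) - sqrt (cond_var M F S x))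
      \<le> sqrt (cond_var M F S x) * (2 * sqrt (V' x) - sqrt (cond_var M F S x))"
    using le cond_var_nonneg[OF F S] by eventually_elim (auto intro: mult_left_mono)
qed (intro integrable_ae_bounded ae_bounded_intros ae_bounded_cond_var[OF F S] V)+

lemma (in prob_space) binning_correction_le:
  assumes F: "subalgebra M F" and S: "ae_bounded M S" and V: "ae_bounded M V"
    and V_nonneg: "AE x in M. 0 \<le> V x"
    and w: "0 \<le> w" and var_le: "AE x in M. cond_var M F S x \<le> (w / 2)\<^sup>2"
  shows "binning_correction M F S V \<le> w * (\<integral>x. sqrt (V x) \<partial>M)"
proof -
  have "binning_correction M F S V \<le> (\<integral>x. w * sqrt (V x) \<partial>M)"
    unfolding binning_correction_def
  proof (rule integral_mono_AE)
    show "AE x in M. sqrt (cond_var M F S x) * (2 * sqrt (V x) - sqrt (cond_var M F S x))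
        \<le> w * sqrt (V x)"
      using V_nonneg var_le cond_var_nonneg[OF F S]
    proof eventually_elim
      case (elim x)
      have "sqrt (cond_var M F S x) \<le> w / 2"
        using elim w real_sqrt_le_mono[of "cond_var M F S x" "(w / 2)\<^sup>2"] by simp
      then have "sqrt (cond_var M F S x) * (2 * sqrt (V x)) \<le> w / 2 * (2 * sqrt (V x))"
        using elim by (intro mult_right_mono) auto
      then show ?case using elim by (simp add: algebra_simps)
    qed
  qed (intro integrable_ae_bounded ae_bounded_intros ae_bounded_cond_var[OF F S] V)+
  then show ?thesis by simp
qed

lemma (in prob_space) MSE_eq_CL_plus_GL:
  assumes S: "ae_bounded M S" and Q: "ae_bounded M Q"
  shows "MSE M S Q = CL M S Q + GL M S Q"
proof -
  have S_M: "S \<in> borel_measurable M" using S by (rule ae_bounded_measurable)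
  have "(\<integral>x. (Q x - S x)\<^sup>2 \<partial>M)
      = (\<integral>x. (Q x - calib M S Q x)\<^sup>2 \<partial>M) + (\<integral>x. (calib M S Q x - S x)\<^sup>2 \<partial>M)"
    unfolding calib_def
    by (intro integral_sq_diff_cond_exp subalgebra_gen[OF subalgebra_refl S_M] S Q measurable_gen)
      (use S_M in \<open>auto simp: measurable_def\<close>)
  then show ?thesis unfolding MSE_def CL_def GL_def by (simp add: power2_commute add.commute)
qed

section \<open>Conditioning on a discrete index\<close>

text \<open>On a null set \<open>A\<close> the division by zero makes this \<open>0\<close>.\<close>

definition event_mean :: "'a measure \<Rightarrow> ('a \<Rightarrow> real) \<Rightarrow> 'a set \<Rightarrow> real" where
  "event_mean M Z A = (\<integral>x. indicator A x * Z x \<partial>M) / measure M A"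

lemma (in finite_measure) event_mean_mult_measure:
  assumes "A \<in> sets M"
  shows "event_mean M Z A * measure M A = (\<integral>x. indicator A x * Z x \<partial>M)"
proof (cases "measure M A = 0")
  case True
  then have "AE x in M. x \<notin> A"
    using assms by (intro AE_not_in) (simp add: null_setsI emeasure_eq_measure)
  then have "(\<integral>x. indicator A x * Z x \<partial>M) = 0"
    by (intro integral_eq_zero_AE) (auto elim!: eventually_mono)
  with True show ?thesis by simp
qed (simp add: event_mean_def)

lemma (in finite_measure) abs_event_mean_le:
  assumes A: "A \<in> sets M" and Z: "Z \<in> borel_measurable M"
    and c: "AE x in M. \<bar>Z x\<bar> \<le> c" "0 \<le> c"
  shows "\<bar>event_mean M Z A\<bar> \<le> c"
proof (cases "measure M A = 0")
  case False
  have "\<bar>\<integral>x. indicator A x * Z x \<partial>M\<bar> \<le> (\<integral>x. \<bar>indicator A x * Z x\<bar> \<partial>M)"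
    by (rule integral_abs_bound)
  also have "\<dots> \<le> (\<integral>x. c * indicator A x \<partial>M)"
  proof (rule integral_mono_AE)
    show "AE x in M. \<bar>indicator A x * Z x\<bar> \<le> c * indicator A x"
      using c(1) by eventually_elim (auto split: split_indicator)
    have "AE x in M. norm (indicator A x * Z x) \<le> c"
      using c(1) by eventually_elim (auto split: split_indicator)
    then show "integrable M (\<lambda>x. \<bar>indicator A x * Z x\<bar>)"
      using A Z by (intro integrable_abs integrable_const_bound[where B=c]) auto
  qed (use A in \<open>simp add: emeasure_eq_measure\<close>)
  also have "\<dots> = c * measure M A" using A by simp
  finally show ?thesis
    using False measure_nonneg[of M A] c(2) by (simp add: event_mean_def abs_divide divide_le_eq)
qed (simp add: event_mean_def c)

lemma (in prob_space) set_integral_gen_index_eq: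
  fixes idx :: "'a \<Rightarrow> nat"
  assumes idx [measurable]: "idx \<in> measurable M (count_space UNIV)"
    and f: "ae_bounded M f" and g: "ae_bounded M g"
    and cells: "\<And>i. (LINT x:{y \<in> space M. idx y = i}|M. f x) = (LINT x:{y \<in> space M. idx y = i}|M. g x)"
    and A: "A \<in> sets (gen M (count_space UNIV) idx)"
  shows "(LINT x:A|M. f x) = (LINT x:A|M. g x)"
proof -
  obtain K where K: "A = idx -` K \<inter> space M"
    using A unfolding gen_def by (auto simp: sets_vimage_algebra2)
  define A_cell where "A_cell i = (if i \<in> K then {y \<in> space M. idx y = i} else {})" for i
  have [measurable]: "A_cell i \<in> sets M" for i unfolding A_cell_def by simp
  have A_eq: "A = (\<Union>i. A_cell i)" unfolding K A_cell_def by auto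
  have disj: "A_cell i \<inter> A_cell j = {}" if "i \<noteq> j" for i j
    using that unfolding A_cell_def by auto
  have set_int: "set_integrable M A h" if "ae_bounded M h" for h
    unfolding set_integrable_def A_eq
    by (intro integrable_mult_indicator integrable_ae_bounded that) measurable
  have "(LINT x:A|M. f x) = (\<Sum>i. (LINT x:A_cell i|M. f x))"
    using set_int[OF f] unfolding A_eq by (intro lebesgue_integral_countable_add disj) simp_all
  also have "\<dots> = (\<Sum>i. (LINT x:A_cell i|M. g x))"
  proof -
    have "(LINT x:A_cell i|M. f x) = (LINT x:A_cell i|M. g x)" for i
      using cells[of i] by (simp add: A_cell_def set_lebesgue_integral_def)
    then show ?thesis by simp
  qed
  also have "\<dots> = (LINT x:A|M. g x)"
    using set_int[OF g] unfolding A_eq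
    by (intro lebesgue_integral_countable_add[symmetric] disj) simp_all
  finally show ?thesis .
qed

lemma (in prob_space) real_cond_exp_gen_index:
  fixes idx :: "'a \<Rightarrow> nat"
  assumes idx [measurable]: "idx \<in> measurable M (count_space UNIV)" and Z: "ae_bounded M Z"
  shows "AE x in M. real_cond_exp M (gen M (count_space UNIV) idx) Z x
    = event_mean M Z {y \<in> space M. idx y = idx x}"
proof -
  define G where "G = gen M (count_space UNIV) idx"
  interpret sigma_finite_subalgebra M G
    unfolding G_def by (intro sigma_finite_subalgebraI subalgebra_gen[OF subalgebra_refl idx])
  define cell where "cell i = {y \<in> space M. idx y = i}" for i
  define g where "g x = event_mean M Z (cell (idx x))" for x
  have [measurable]: "Z \<in> borel_measurable M" "cell i \<in> sets M" for i
    using Z unfolding cell_def by (auto intro: ae_bounded_measurable)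
  have g_G: "g \<in> borel_measurable G"
    unfolding g_def G_def
    by (rule measurable_compose[OF measurable_gen]) (auto simp: measurable_count_space_eq1)
  obtain c0 where "AE x in M. \<bar>Z x\<bar> \<le> c0"
    using Z unfolding ae_bounded_def by blast
  then have c: "AE x in M. \<bar>Z x\<bar> \<le> max c0 0" "0 \<le> max c0 0"
    by (auto elim!: eventually_mono)
  have g: "ae_bounded M g"
    using abs_event_mean_le[OF _ _ c] g_G measurable_from_subalg[OF subalg]
    by (intro ae_boundedI[where c="max c0 0"] AE_I2) (auto simp: g_def)
  have cell_eq: "(LINT x:cell i|M. Z x) = (LINT x:cell i|M. g x)" for i
  proof -
    have "(LINT x:cell i|M. g x) = (\<integral>x. event_mean M Z (cell i) * indicator (cell i) x \<partial>M)"
      unfolding set_lebesgue_integral_def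
      by (intro Bochner_Integration.integral_cong) (auto simp: g_def cell_def split: split_indicator)
    then show ?thesis
      using event_mean_mult_measure[of "cell i" Z] by (simp add: set_lebesgue_integral_def)
  qed
  have "AE x in M. real_cond_exp M G Z x = g x"
  proof (rule real_cond_exp_charact)
    fix A assume "A \<in> sets G"
    then show "(LINT x:A|M. Z x) = (LINT x:A|M. g x)"
      using set_integral_gen_index_eq[OF idx Z g cell_eq[unfolded cell_def]] unfolding G_def by blast
  qed (auto intro: integrable_ae_bounded Z g g_G)
  then show ?thesis unfolding G_def g_def cell_def .
qed

section \<open>Binned classifiers\<close>

locale binning = prob_space M for M :: "'a measure" +
  fixes S :: "'a \<Rightarrow> real" and B :: "nat \<Rightarrow> real set" and J :: "nat set"
  assumes S_measurable [measurable]: "S \<in> borel_measurable M"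
    and S_range: "\<And>\<omega>. \<omega> \<in> space M \<Longrightarrow> S \<omega> \<in> {0..1}"
    and partition: "interval_partition B J"
begin

definition bin_index :: "'a \<Rightarrow> nat" where
  "bin_index \<omega> = (THE j. j \<in> J \<and> S \<omega> \<in> B j)"

lemma bin_index_eq_iff:
  assumes "\<omega> \<in> space M"
  shows "bin_index \<omega> = j \<longleftrightarrow> j \<in> J \<and> S \<omega> \<in> B j"
proof -
  have ex1: "\<exists>!j. j \<in> J \<and> S \<omega> \<in> B j"
    using partition S_range[OF assms] unfolding interval_partition_def disjoint_family_on_def by blast
  show ?thesis
  proof
    assume "bin_index \<omega> = j"
    then show "j \<in> J \<and> S \<omega> \<in> B j" using theI'[OF ex1] unfolding bin_index_def by simp
  next
    assume "j \<in> J \<and> S \<omega> \<in> B j"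
    then show "bin_index \<omega> = j" unfolding bin_index_def by (rule the1_equality[OF ex1])
  qed
qed

lemma bin_index_in: "\<omega> \<in> space M \<Longrightarrow> bin_index \<omega> \<in> J \<and> S \<omega> \<in> B (bin_index \<omega>)"
  using bin_index_eq_iff by blast

lemma measurable_bin_index:
  assumes "space K = space M" and "\<And>j. j \<in> J \<Longrightarrow> S -` B j \<inter> space M \<in> sets K"
  shows "bin_index \<in> measurable K (count_space UNIV)"
  unfolding measurable_count_space_eq2_countable
proof (intro conjI ballI)
  fix j :: nat
  have "bin_index -` {j} \<inter> space K = (if j \<in> J then S -` B j \<inter> space M else {})"
    using assms(1) bin_index_eq_iff by auto
  then show "bin_index -` {j} \<inter> space K \<in> sets K" using assms(2) by simp
qed simp

lemma bin_borel: "j \<in> J \<Longrightarrow> B j \<in> sets borel"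
  using partition unfolding interval_partition_def by (auto intro: real_interval_borel_measurable)

lemma bin_index_measurable [measurable]: "bin_index \<in> measurable M (count_space UNIV)"
  by (rule measurable_bin_index) (auto intro: measurable_sets[OF S_measurable] bin_borel)

lemma bin_index_measurable_gen: "bin_index \<in> measurable (gen M borel S) (count_space UNIV)"
  by (rule measurable_bin_index) (auto simp: gen_def sets_vimage_algebra2 intro: bin_borel)

definition bin_mean :: "nat \<Rightarrow> real" where
  "bin_mean j = event_mean M S {\<omega> \<in> space M. bin_index \<omega> = j}"

lemma binned_eq: "\<omega> \<in> space M \<Longrightarrow> binned M B J S \<omega> = bin_mean (bin_index \<omega>)"
proof -
  assume \<omega>: "\<omega> \<in> space M"
  have "{\<omega>' \<in> space M. S \<omega>' \<in> B (bin_index \<omega>)} = {\<omega>' \<in> space M. bin_index \<omega>' = bin_index \<omega>}"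
    using bin_index_eq_iff bin_index_in[OF \<omega>] by blast
  then show ?thesis
    unfolding binned_def Let_def bin_index_def[symmetric] bin_mean_def event_mean_def by simp
qed

lemma binned_measurable:
  assumes "space K = space M" and "bin_index \<in> measurable K (count_space UNIV)"
  shows "binned M B J S \<in> borel_measurable K"
proof -
  have "(\<lambda>\<omega>. bin_mean (bin_index \<omega>)) \<in> borel_measurable K"
    by (rule measurable_compose[OF assms(2)]) (simp add: measurable_count_space_eq1)
  then show ?thesis by (rule measurable_cong[THEN iffD1, rotated]) (simp add: binned_eq assms(1))
qed

lemma binned_measurable_M [measurable]: "binned M B J S \<in> borel_measurable M"
  using binned_measurable by simp

lemma subalgebra_gen_S: "subalgebra M (gen M borel S)"
  using subalgebra_gen[OF subalgebra_refl S_measurable] .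

lemma subalgebra_bin_sigma: "subalgebra (gen M borel S) (bin_sigma M B J S)"
  unfolding bin_sigma_def
  by (intro subalgebra_gen subalgebra_gen_S binned_measurable bin_index_measurable_gen)
    (simp add: gen_def)

lemma subalgebra_gen_bin_index: "subalgebra M (gen M (count_space UNIV) bin_index)"
  using subalgebra_gen[OF subalgebra_refl bin_index_measurable] .

lemma subalgebra_gen_bin_index_bin_sigma:
  "subalgebra (gen M (count_space UNIV) bin_index) (bin_sigma M B J S)"
  unfolding bin_sigma_def
  by (intro subalgebra_gen subalgebra_gen_bin_index binned_measurable measurable_gen)
    (auto simp: gen_def)

lemma subalgebra_gen_pair_bin_sigma:
  assumes "Rw \<in> measurable M (count_space UNIV)"
  shows "subalgebra (gen M (borel \<Otimes>\<^sub>M count_space UNIV) (\<lambda>\<omega>. (binned M B J S \<omega>, Rw \<omega>)))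
    (bin_sigma M B J S)"
proof -
  let ?H = "gen M (borel \<Otimes>\<^sub>M count_space UNIV) (\<lambda>\<omega>. (binned M B J S \<omega>, Rw \<omega>))"
  have "subalgebra M ?H"
    using assms by (intro subalgebra_gen subalgebra_refl) measurable
  moreover have "(\<lambda>\<omega>. fst (binned M B J S \<omega>, Rw \<omega>)) \<in> borel_measurable ?H"
    by (intro measurable_compose[OF measurable_gen measurable_fst]) (auto simp: space_pair_measure)
  then have "binned M B J S \<in> borel_measurable ?H" by simp
  ultimately show ?thesis unfolding bin_sigma_def by (rule subalgebra_gen)
qed

lemma S_bounded: "ae_bounded M S"
  using S_range by (intro ae_boundedI[where c=1] AE_I2) auto

lemma cond_exp_gen_bin_index:
  "AE \<omega> in M. real_cond_exp M (gen M (count_space UNIV) bin_index) S \<omega> = binned M B J S \<omega>"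
  using real_cond_exp_gen_index[OF bin_index_measurable S_bounded] AE_space
  by eventually_elim (simp add: binned_eq bin_mean_def)

text \<open>The bin index may generate a strictly finer \<sigma>-algebra than \<open>S\<^sub>B\<close>, since distinct bins
  can have equal means; the tower property passes from one to the other.\<close>
lemma cond_exp_bin_sigma: "AE \<omega> in M. real_cond_exp M (bin_sigma M B J S) S \<omega> = binned M B J S \<omega>"
proof -
  let ?G = "gen M (count_space UNIV) bin_index" and ?F = "bin_sigma M B J S"
  interpret sigma_finite_subalgebra M ?F
    by (intro sigma_finite_subalgebraI subalgebra_trans[OF subalgebra_gen_S subalgebra_bin_sigma])
  have binned: "ae_bounded M (binned M B J S)"
    by (rule ae_bounded_AE_cong[OF ae_bounded_cond_exp[OF subalgebra_gen_bin_index S_bounded]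
          binned_measurable_M cond_exp_gen_bin_index])
  have "AE \<omega> in M. real_cond_exp M ?F (real_cond_exp M ?G S) \<omega> = real_cond_exp M ?F S \<omega>"
    by (intro real_cond_exp_nested_subalg subalgebra_gen_bin_index subalgebra_gen_bin_index_bin_sigma
        integrable_ae_bounded S_bounded)
  moreover have "AE \<omega> in M. real_cond_exp M ?F (real_cond_exp M ?G S) \<omega>
      = real_cond_exp M ?F (binned M B J S) \<omega>"
    by (rule real_cond_exp_cong[OF cond_exp_gen_bin_index ae_bounded_measurable
          [OF ae_bounded_cond_exp[OF subalgebra_gen_bin_index S_bounded]] binned_measurable_M])
  moreover have "AE \<omega> in M. real_cond_exp M ?F (binned M B J S) \<omega> = binned M B J S \<omega>"
    by (rule real_cond_exp_F_meas[OF integrable_ae_bounded[OF binned]])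
      (simp add: bin_sigma_def measurable_gen)
  ultimately show ?thesis by eventually_elim simp
qed

lemma CL_plus_GL_ge:
  assumes Q: "ae_bounded M Q" and Rw: "Rw \<in> measurable M (count_space UNIV)"
  shows "CL M S Q + GL M S Q \<ge> ece_B M B J S Q + GL_lower M B J S Q Rw
    - binning_correction M (bin_sigma M B J S) S (cond_var M (bin_sigma M B J S) (calib M S Q))"
proof -
  let ?F = "bin_sigma M B J S"
  interpret sigma_finite_subalgebra M ?F
    by (intro sigma_finite_subalgebraI subalgebra_trans[OF subalgebra_gen_S subalgebra_bin_sigma])
  have "ece_B M B J S Q = (\<integral>\<omega>. (real_cond_exp M ?F S \<omega> - real_cond_exp M ?F Q \<omega>)\<^sup>2 \<partial>M)"
    unfolding ece_B_def bin_calib_def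
  proof (rule integral_cong_AE)
    show "AE \<omega> in M. (binned M B J S \<omega> - real_cond_exp M ?F Q \<omega>)\<^sup>2
        = (real_cond_exp M ?F S \<omega> - real_cond_exp M ?F Q \<omega>)\<^sup>2"
      using cond_exp_bin_sigma by eventually_elim simp
  qed measurable
  moreover have "subalgebra M (gen M (borel \<Otimes>\<^sub>M count_space UNIV) (\<lambda>\<omega>. (binned M B J S \<omega>, Rw \<omega>)))"
    using Rw by (intro subalgebra_gen subalgebra_refl) measurable
  ultimately show ?thesis
    using calibration_grouping_bound[OF subalgebra_gen_S subalgebra_bin_sigma _
        subalgebra_gen_pair_bin_sigma[OF Rw] S_bounded Q]
    unfolding CL_def GL_def GL_lower_def calib_def by simp
qed

lemma cond_var_calib_le:
  assumes Q: "ae_bounded M Q" and Q01: "AE \<omega> in M. 0 \<le> Q \<omega> \<and> Q \<omega> \<le> 1"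
  shows "AE \<omega> in M. cond_var M (bin_sigma M B J S) (calib M S Q) \<omega>
    \<le> bin_calib M B J S Q \<omega> * (1 - bin_calib M B J S Q \<omega>)"
proof -
  let ?F = "bin_sigma M B J S"
  have F: "subalgebra M ?F" using subalgebra_trans[OF subalgebra_gen_S subalgebra_bin_sigma] .
  interpret sigma_finite_subalgebra M ?F using sigma_finite_subalgebraI[OF F] .
  have "AE \<omega> in M. real_cond_exp M ?F (calib M S Q) \<omega> = bin_calib M B J S Q \<omega>"
    unfolding calib_def bin_calib_def
    by (intro real_cond_exp_nested_subalg subalgebra_gen_S subalgebra_bin_sigma integrable_ae_bounded Q)
  with cond_var_le_cond_exp_one_minus[OF F ae_bounded_cond_exp[OF subalgebra_gen_S Q]
      cond_exp_unit_interval[OF subalgebra_gen_S Q Q01]]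
  show ?thesis unfolding calib_def by eventually_elim simp
qed

lemma cond_var_bin_sigma_le:
  assumes width: "\<And>j. j \<in> J \<Longrightarrow> B j \<subseteq> {a j .. a j + w}"
  shows "AE \<omega> in M. cond_var M (bin_sigma M B J S) S \<omega> \<le> (w / 2)\<^sup>2"
proof -
  let ?G = "gen M (count_space UNIV) bin_index" and ?F = "bin_sigma M B J S"
  interpret G: sigma_finite_subalgebra M ?G using sigma_finite_subalgebraI[OF subalgebra_gen_bin_index] .
  have F: "subalgebra M ?F" using subalgebra_trans[OF subalgebra_gen_S subalgebra_bin_sigma] .
  interpret sigma_finite_subalgebra M ?F using sigma_finite_subalgebraI[OF F] .
  define mid where "mid \<omega> = a (bin_index \<omega>) + w / 2" for \<omega>
  have mid_G: "mid \<in> borel_measurable ?G"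
    unfolding mid_def by (rule measurable_compose[OF measurable_gen]) (auto simp: measurable_count_space_eq1)
  have dist: "\<bar>S \<omega> - mid \<omega>\<bar> \<le> w / 2" if "\<omega> \<in> space M" for \<omega>
  proof -
    have "a (bin_index \<omega>) \<le> S \<omega> \<and> S \<omega> \<le> a (bin_index \<omega>) + w"
      using width[of "bin_index \<omega>"] bin_index_in[OF that] by auto
    then show ?thesis unfolding mid_def abs_le_iff by auto
  qed
  have "\<bar>mid \<omega>\<bar> \<le> 1 + w / 2" if "\<omega> \<in> space M" for \<omega>
    using dist[OF that] S_range[OF that] unfolding atLeastAtMost_iff by arith
  then have mid: "ae_bounded M mid"
    using measurable_from_subalg[OF subalgebra_gen_bin_index mid_G]
    by (intro ae_boundedI[where c="1 + w / 2"] AE_I2)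
  have "\<bar>S \<omega> - mid \<omega>\<bar>\<^sup>2 \<le> (w / 2)\<^sup>2" if "\<omega> \<in> space M" for \<omega>
    using dist[OF that] by (intro power_mono) auto
  then have "AE \<omega> in M. (S \<omega> - mid \<omega>)\<^sup>2 \<le> (w / 2)\<^sup>2" by (intro AE_I2) simp
  then have "AE \<omega> in M. real_cond_exp M ?G (\<lambda>\<omega>. (S \<omega> - mid \<omega>)\<^sup>2) \<omega> \<le> (w / 2)\<^sup>2"
    by (intro G.real_cond_exp_le_c integrable_ae_bounded ae_bounded_intros S_bounded mid)
  with cond_var_le_cond_exp_sq_diff[OF subalgebra_gen_bin_index S_bounded mid mid_G]
  have "AE \<omega> in M. cond_var M ?G S \<omega> \<le> (w / 2)\<^sup>2" by eventually_elim simp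
  then have "AE \<omega> in M. real_cond_exp M ?F (cond_var M ?G S) \<omega> \<le> (w / 2)\<^sup>2"
    by (intro real_cond_exp_le_c integrable_ae_bounded ae_bounded_cond_var subalgebra_gen_bin_index
        S_bounded)
  moreover have "AE \<omega> in M. real_cond_exp M ?G S \<omega> = real_cond_exp M ?F S \<omega>"
    using cond_exp_gen_bin_index cond_exp_bin_sigma by eventually_elim simp
  then have "AE \<omega> in M. real_cond_exp M ?F (cond_var M ?G S) \<omega> = cond_var M ?F S \<omega>"
    by (rule cond_var_nested_subalg[OF subalgebra_gen_bin_index subalgebra_gen_bin_index_bin_sigma
          S_bounded])
  ultimately show ?thesis by eventually_elim simp
qed

lemma binning_correction_calib_le:
  assumes Q: "ae_bounded M Q" and Q01: "AE \<omega> in M. 0 \<le> Q \<omega> \<and> Q \<omega> \<le> 1"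
  shows "binning_correction M (bin_sigma M B J S) S (cond_var M (bin_sigma M B J S) (calib M S Q))
    \<le> binning_correction M (bin_sigma M B J S) S
        (\<lambda>\<omega>. bin_calib M B J S Q \<omega> * (1 - bin_calib M B J S Q \<omega>))"
proof -
  have F: "subalgebra M (bin_sigma M B J S)"
    using subalgebra_trans[OF subalgebra_gen_S subalgebra_bin_sigma] .
  have C: "ae_bounded M (calib M S Q)"
    unfolding calib_def using ae_bounded_cond_exp[OF subalgebra_gen_S Q] .
  have C_B: "ae_bounded M (bin_calib M B J S Q)"
    unfolding bin_calib_def using ae_bounded_cond_exp[OF F Q] .
  show ?thesis
    using cond_var_nonneg[OF F C] cond_var_calib_le[OF Q Q01]
    by (intro binning_correction_mono[OF F S_bounded] ae_bounded_cond_var[OF F C]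
        ae_bounded_intros C_B) (auto elim!: eventually_mono)
qed

lemma MSE_ge_width:
  assumes Q: "ae_bounded M Q" and Q01: "AE \<omega> in M. 0 \<le> Q \<omega> \<and> Q \<omega> \<le> 1"
    and Rw: "Rw \<in> measurable M (count_space UNIV)"
    and width: "\<And>j. j \<in> J \<Longrightarrow> B j \<subseteq> {a j .. a j + w}"
  shows "MSE M S Q \<ge> ece_B M B J S Q + GL_lower M B J S Q Rw
    - w * (\<integral>\<omega>. sqrt (bin_calib M B J S Q \<omega> * (1 - bin_calib M B J S Q \<omega>)) \<partial>M)"
proof -
  have F: "subalgebra M (bin_sigma M B J S)"
    using subalgebra_trans[OF subalgebra_gen_S subalgebra_bin_sigma] .
  obtain \<omega> where "\<omega> \<in> space M" using not_empty by blast
  then have "0 \<le> w"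
    using width[of "bin_index \<omega>"] bin_index_in[of \<omega>] by force
  moreover have "ae_bounded M (bin_calib M B J S Q)"
    unfolding bin_calib_def using ae_bounded_cond_exp[OF F Q] .
  moreover have "AE \<omega> in M. 0 \<le> bin_calib M B J S Q \<omega> * (1 - bin_calib M B J S Q \<omega>)"
    using cond_exp_unit_interval[OF F Q Q01] unfolding bin_calib_def by eventually_elim simp
  ultimately have "binning_correction M (bin_sigma M B J S) S
        (\<lambda>\<omega>. bin_calib M B J S Q \<omega> * (1 - bin_calib M B J S Q \<omega>))
      \<le> w * (\<integral>\<omega>. sqrt (bin_calib M B J S Q \<omega> * (1 - bin_calib M B J S Q \<omega>)) \<partial>M)"
    by (intro binning_correction_le[OF F S_bounded] ae_bounded_intros cond_var_bin_sigma_le[OF width])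
  then show ?thesis
    using MSE_eq_CL_plus_GL[OF S_bounded Q] CL_plus_GL_ge[OF Q Rw] binning_correction_calib_le[OF Q Q01]
    by linarith
qed

end

section \<open>Equal-width bins\<close>

lemma eq_bins_subset: "eq_bins n j \<subseteq> {real j / real n .. real j / real n + 1 / real n}"
  unfolding eq_bins_def by (auto simp: add_divide_distrib)

lemma eq_bins_disjoint: "disjoint_family_on (eq_bins n) {..<n}"
proof -
  have ordered: "eq_bins n i \<inter> eq_bins n j = {}" if "i < j" "j < n" for i j
  proof -
    have "real (i + 1) / real n \<le> real j / real n"
      using that by (intro divide_right_mono) auto
    then show ?thesis
      using that eq_bins_subset[of n j] unfolding eq_bins_def by auto
  qed
  show ?thesis
    unfolding disjoint_family_on_def
  proof (intro ballI impI)
    fix i j assume "i \<in> {..<n}" "j \<in> {..<n}" "i \<noteq> j"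
    then show "eq_bins n i \<inter> eq_bins n j = {}"
      using ordered[of i j] ordered[of j i] by (cases "i < j") auto
  qed
qed

lemma eq_bins_cover:
  assumes n: "1 \<le> n" and s: "s \<in> {0..1}"
  shows "\<exists>j<n. s \<in> eq_bins n j"
proof (cases "s = 1")
  case True
  then show ?thesis
    using n by (intro exI[of _ "n - 1"]) (auto simp: eq_bins_def of_nat_diff)
next
  case False
  define j where "j = nat \<lfloor>real n * s\<rfloor>"
  have j: "real j \<le> real n * s" "real n * s < real j + 1"
    using s unfolding j_def by (auto simp: of_nat_nat)
  have "real n * s < real n" using n s False by auto
  then have "j < n" using j by linarith
  moreover have "real j / real n \<le> s" "s < real (j + 1) / real n"
    using j n by (auto simp: field_simps)
  ultimately show ?thesis unfolding eq_bins_def by auto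
qed

lemma interval_partition_eq_bins:
  assumes n: "1 \<le> n"
  shows "interval_partition (eq_bins n) {..<n}"
  unfolding interval_partition_def
proof (intro conjI ballI)
  fix j assume "j \<in> {..<n}"
  have "real j / real n < real (j + 1) / real n" using n by (simp add: divide_strict_right_mono)
  then show "eq_bins n j \<noteq> {}" unfolding eq_bins_def by (auto intro!: exI[of _ "real j / real n"])
  show "is_interval (eq_bins n j)" unfolding eq_bins_def is_interval_1 by auto
next
  have "eq_bins n j \<subseteq> {0..1}" if "j < n" for j
  proof -
    have "real j / real n + 1 / real n \<le> 1"
      using that n by (simp add: add_divide_distrib[symmetric] divide_le_eq)
    then have "{real j / real n .. real j / real n + 1 / real n} \<subseteq> {0..1}" by auto
    with eq_bins_subset[of n j] show ?thesis by (rule subset_trans)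
  qed
  then show "(\<Union>j\<in>{..<n}. eq_bins n j) = {0..1}"
    using eq_bins_cover[OF n] by blast
qed (rule eq_bins_disjoint)

theorem corollary2:
  fixes M :: "'a measure" and N :: "'x measure" and X :: "'a \<Rightarrow> 'x" and Y :: "'a \<Rightarrow> bool"
    and f :: "'x \<Rightarrow> real" and R :: "'x \<Rightarrow> nat" and B :: "nat \<Rightarrow> real set" and J :: "nat set"
  assumes "prob_space M"
    and "X \<in> measurable M N"
    and "Y \<in> measurable M (count_space UNIV)"
    and "f \<in> borel_measurable N"
    and "\<forall>x\<in>space N. 0 \<le> f x \<and> f x \<le> 1"
    and "R \<in> measurable N (count_space UNIV)"
    and "interval_partition B J"
  defines "Q \<equiv> real_cond_exp M (gen M N X) (\<lambda>\<omega>. if Y \<omega> then 1 else 0)"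
    and "S \<equiv> (\<lambda>\<omega>. f (X \<omega>))"
    and "Rw \<equiv> (\<lambda>\<omega>. R (X \<omega>))"
  shows "MSE M S Q = CL M S Q + GL M S Q
    \<and> CL M S Q + GL M S Q \<ge> ece_B M B J S Q + GL_lower M B J S Q Rw
           - (\<integral>\<omega>. sqrt (cond_var M (bin_sigma M B J S) S \<omega>) *
                 (2 * sqrt (cond_var M (bin_sigma M B J S) (calib M S Q) \<omega>)
                    - sqrt (cond_var M (bin_sigma M B J S) S \<omega>)) \<partial>M)
    \<and> ece_B M B J S Q + GL_lower M B J S Q Rw
           - (\<integral>\<omega>. sqrt (cond_var M (bin_sigma M B J S) S \<omega>) *
                 (2 * sqrt (cond_var M (bin_sigma M B J S) (calib M S Q) \<omega>)
                    - sqrt (cond_var M (bin_sigma M B J S) S \<omega>)) \<partial>M)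
         \<ge> ece_B M B J S Q + GL_lower M B J S Q Rw
           - (\<integral>\<omega>. sqrt (cond_var M (bin_sigma M B J S) S \<omega>) *
                 (2 * sqrt (bin_calib M B J S Q \<omega> * (1 - bin_calib M B J S Q \<omega>))
                    - sqrt (cond_var M (bin_sigma M B J S) S \<omega>)) \<partial>M)
    \<and> (\<forall>n::nat. n \<ge> 1 \<longrightarrow>
           MSE M S Q \<ge> ece_B M (eq_bins n) {..<n} S Q + GL_lower M (eq_bins n) {..<n} S Q Rw
             - 1 / real n * (\<integral>\<omega>. sqrt (bin_calib M (eq_bins n) {..<n} S Q \<omega>
                                  * (1 - bin_calib M (eq_bins n) {..<n} S Q \<omega>)) \<partial>M))"
proof -
  interpret prob_space M by fact
  have [measurable]: "X \<in> measurable M N" "Y \<in> measurable M (count_space UNIV)"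
    "f \<in> borel_measurable N" "R \<in> measurable N (count_space UNIV)"
    using assms by simp_all
  have S_range: "S \<omega> \<in> {0..1}" if "\<omega> \<in> space M" for \<omega>
    using assms(5) measurable_space[OF assms(2) that] unfolding S_def by auto
  have bins: "binning M S B J"
    using S_range assms(7) unfolding S_def by unfold_locales auto
  have eq_bins: "binning M S (eq_bins n) {..<n}" if "1 \<le> n" for n
    using S_range interval_partition_eq_bins[OF that] unfolding S_def by unfold_locales auto
  have Rw: "Rw \<in> measurable M (count_space UNIV)" unfolding Rw_def by measurable
  have X: "subalgebra M (gen M N X)" by (intro subalgebra_gen subalgebra_refl) measurable
  have Y: "ae_bounded M (\<lambda>\<omega>. if Y \<omega> then 1 else 0)"
    by (intro ae_boundedI[where c=1] AE_I2) auto
  have Q: "ae_bounded M Q" unfolding Q_def using ae_bounded_cond_exp[OF X Y] .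
  have Q01: "AE \<omega> in M. 0 \<le> Q \<omega> \<and> Q \<omega> \<le> 1"
    unfolding Q_def by (rule cond_exp_unit_interval[OF X Y]) auto
  show ?thesis
    using MSE_eq_CL_plus_GL[OF binning.S_bounded[OF bins] Q]
      binning.CL_plus_GL_ge[OF bins Q Rw] binning.binning_correction_calib_le[OF bins Q Q01]
      binning.MSE_ge_width[OF eq_bins Q Q01 Rw eq_bins_subset]
    unfolding binning_correction_def by auto
qed

end
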